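(* Let $n\ge 2$, $d\ge 1$, $\sigma>0$ and $\alpha\in(0,1)$, and consider the homoscedastic model, i.e. $\sigma_1=\dots=\sigma_n=\sigma$ (so that also $\sigma^\#_i=\sigma$ for all $i$). Let $\hat\pi$ be any one of the four estimators $\pi^{\mathrm{gr}}$, $\pi^{\mathrm{LSS}}$, $\pi^{\mathrm{LSNS}}$, $\pi^{\mathrm{LSL}}$. Then $$\bar\kappa_\alpha(\hat\pi)\le 4\max\Big\{\Big(2\log\frac{8n^2}{\alpha}\Big)^{1/2},\ \Big(d\log\frac{4n^2}{\alpha}\Big)^{1/4}\Big\}.$$
   Context: Model: integers $n\ge2$, $d\ge1$. Unknown parameters: $\boldsymbol\theta=(\theta_1,\dots,\theta_n)$ with $\theta_i\in\mathbb R^d$, noise levels $\boldsymbol\sigma=(\sigma_1,\dots,\sigma_n)$ with $\sigma_i>0$, and a permutation $\pi^*\in\mathfrak S_n$ (the symmetric group on $\{1,\dots,n\}$). One observes $$X_i=\theta_i+\sigma_i\xi_i,\qquad X_i^\#=\theta_{\pi^*(i)}+\sigma_i^\#\xi_i^\#,\qquad i=1,\dots,n,$$ where $\sigma_i^\#=\sigma_{\pi^*(i)}$ and $\xi_1,\dots,\xi_n,\xi_1^\#,\dots,\xi_n^\#$ are i.i.d. $\mathcal N(0,I_d)$. The law of the data is denoted $\mathbf P_{\boldsymbol\theta,\boldsymbol\sigma,\pi^*}$ and its expectation $\mathbf E_{\boldsymbol\theta,\boldsymbol\sigma,\pi^*}$. An estimator is a measurable map from the data to $\mathfrak S_n$;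 in the definitions below, ties in argmins are broken arbitrarily (measurably). Estimators: the greedy estimator $\pi^{\mathrm{gr}}$ is defined by $\pi^{\mathrm{gr}}(1)=\arg\min_{j\in\{1,\dots,n\}}\|X_j-X_1^\#\|$ and, recursively for $i=2,\dots,n$, $\pi^{\mathrm{gr}}(i)=\arg\min_{j\notin\{\pi^{\mathrm{gr}}(1),\dots,\pi^{\mathrm{gr}}(i-1)\}}\|X_j-X_i^\#\|$. Further $\pi^{\mathrm{LSS}}=\arg\min_{\pi\in\mathfrak S_n}\sum_{i=1}^n\|X_{\pi(i)}-X_i^\#\|^2$, $\pi^{\mathrm{LSNS}}=\arg\min_{\pi\in\mathfrak S_n}\sum_{i=1}^n\frac{\|X_{\pi(i)}-X_i^\#\|^2}{\sigma_{\pi(i)}^2+(\sigma_i^\#)^2}$ (computed with the noise levels treated as known), $\pi^{\mathrm{LSL}}=\arg\min_{\pi\in\mathfrak S_n}\sum_{i=1}^n\log\|X_{\pi(i)}-X_i^\#\|^2$. Relative separation distance: $\bar\kappa(\boldsymbol\theta,\boldsymbol\sigma)=\min_{i\ne j}\frac{\|\theta_i-\theta_j\|}{(\sigma_i^2+\sigma_j^2)^{1/2}}$. Perceivable separation distance of an estimator $\hat\pi$ (for fixed $n,d,\boldsymbol\sigma$ and $\alpha\in(0,1)$): $$\bar\kappa_\alpha(\hat\pi)=\inf\Big\{\kappa>0:\ \max_{\pi\in\mathfrak S_n}\ \sup_{\boldsymbol\theta:\,\bar\kappa(\boldsymbol\theta,\boldsymbol\sigma)>\kappa}\mathbf P_{\boldsymbol\theta,\boldsymbol\sigma,\pi}(\hat\pi\ne\pi)\le\alpha\Big\}.$$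 *)

theory Defs
  imports "HOL-Probability.Probability" "HOL-Combinatorics.Permutations"
begin

text \<open>Indices: items are indexed by {..<n} (0-based version of 1..n), coordinates of
  vectors in R^d by {..<d}. A vector of R^d is a function nat => real (only the
  coordinates below d matter); a family of n vectors is a function nat => nat => real.\<close>

type_synonym vecs = "nat \<Rightarrow> nat \<Rightarrow> real"
type_synonym data = "vecs \<times> vecs"

definition vdist :: "nat \<Rightarrow> (nat \<Rightarrow> real) \<Rightarrow> (nat \<Rightarrow> real) \<Rightarrow> real" where
  "vdist d x y = sqrt (\<Sum>k<d. (x k - y k)^2)"

definition gauss_vec :: "nat \<Rightarrow> (nat \<Rightarrow> real) measure" where
  "gauss_vec d = PiM {..<d} (\<lambda>_. density lborel std_normal_density)"

definition noise :: "nat \<Rightarrow> nat \<Rightarrow> data measure" where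
  "noise n d = PiM {..<n} (\<lambda>_. gauss_vec d) \<Otimes>\<^sub>M PiM {..<n} (\<lambda>_. gauss_vec d)"

definition data_space :: "nat \<Rightarrow> nat \<Rightarrow> data measure" where
  "data_space n d = PiM {..<n} (\<lambda>_. PiM {..<d} (\<lambda>_. borel))
                    \<Otimes>\<^sub>M PiM {..<n} (\<lambda>_. PiM {..<d} (\<lambda>_. borel))"

definition obs :: "nat \<Rightarrow> nat \<Rightarrow> vecs \<Rightarrow> (nat \<Rightarrow> real) \<Rightarrow> (nat \<Rightarrow> nat) \<Rightarrow> data \<Rightarrow> data" where
  "obs n d \<theta> \<sigma> \<pi> \<omega> =
     ((\<lambda>i\<in>{..<n}. \<lambda>j\<in>{..<d}. \<theta> i j + \<sigma> i * fst \<omega> i j),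
      (\<lambda>i\<in>{..<n}. \<lambda>j\<in>{..<d}. \<theta> (\<pi> i) j + \<sigma> (\<pi> i) * snd \<omega> i j))"

definition err_prob :: "nat \<Rightarrow> nat \<Rightarrow> (data \<Rightarrow> nat \<Rightarrow> nat) \<Rightarrow> vecs \<Rightarrow> (nat \<Rightarrow> real)
    \<Rightarrow> (nat \<Rightarrow> nat) \<Rightarrow> real" where
  "err_prob n d est \<theta> \<sigma> \<pi> =
     measure (noise n d) {\<omega> \<in> space (noise n d). est (obs n d \<theta> \<sigma> \<pi> \<omega>) \<noteq> \<pi>}"

definition rel_sep :: "nat \<Rightarrow> nat \<Rightarrow> vecs \<Rightarrow> (nat \<Rightarrow> real) \<Rightarrow> real" where
  "rel_sep n d \<theta> \<sigma> =
     Min {vdist d (\<theta> i) (\<theta> j) / sqrt ((\<sigma> i)^2 + (\<sigma> j)^2) | i j. i < n \<and> j < n \<and> i \<noteq> j}"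

text \<open>Perceivable separation distance (infimum in the extended reals, so Inf {} = \<infinity>).\<close>
definition perc_sep :: "nat \<Rightarrow> nat \<Rightarrow> (nat \<Rightarrow> real) \<Rightarrow> real \<Rightarrow> (data \<Rightarrow> nat \<Rightarrow> nat) \<Rightarrow> ereal" where
  "perc_sep n d \<sigma> \<alpha> est =
     Inf {ereal \<kappa> | \<kappa>. \<kappa> > 0 \<and>
            (\<forall>\<pi>. \<pi> permutes {..<n} \<longrightarrow>
               (\<forall>\<theta>. rel_sep n d \<theta> \<sigma> > \<kappa> \<longrightarrow> err_prob n d est \<theta> \<sigma> \<pi> \<le> \<alpha>))}"

text \<open>The four estimators, as characterisations of their value p on data D = (X, X#)
  (any tie-breaking is allowed).\<close>

definition is_greedy :: "nat \<Rightarrow> nat \<Rightarrow> data \<Rightarrow> (nat \<Rightarrow> nat) \<Rightarrow> bool" where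
  "is_greedy n d D p \<longleftrightarrow> p permutes {..<n} \<and>
     (\<forall>i<n. \<forall>j<n. j \<notin> p ` {..<i} \<longrightarrow>
        vdist d (fst D (p i)) (snd D i) \<le> vdist d (fst D j) (snd D i))"

definition LSS_cost :: "nat \<Rightarrow> nat \<Rightarrow> data \<Rightarrow> (nat \<Rightarrow> nat) \<Rightarrow> real" where
  "LSS_cost n d D p = (\<Sum>i<n. (vdist d (fst D (p i)) (snd D i))^2)"

definition is_LSS :: "nat \<Rightarrow> nat \<Rightarrow> data \<Rightarrow> (nat \<Rightarrow> nat) \<Rightarrow> bool" where
  "is_LSS n d D p \<longleftrightarrow> p permutes {..<n} \<and>
     (\<forall>q. q permutes {..<n} \<longrightarrow> LSS_cost n d D p \<le> LSS_cost n d D q)"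

text \<open>sigma: noise levels of the X_i; sigs: noise levels sigma#_i of the X#_i (treated as known).\<close>
definition LSNS_cost :: "nat \<Rightarrow> nat \<Rightarrow> (nat \<Rightarrow> real) \<Rightarrow> (nat \<Rightarrow> real) \<Rightarrow> data \<Rightarrow> (nat \<Rightarrow> nat) \<Rightarrow> real" where
  "LSNS_cost n d \<sigma> sigs D p =
     (\<Sum>i<n. (vdist d (fst D (p i)) (snd D i))^2 / ((\<sigma> (p i))^2 + (sigs i)^2))"

definition is_LSNS :: "nat \<Rightarrow> nat \<Rightarrow> (nat \<Rightarrow> real) \<Rightarrow> (nat \<Rightarrow> real) \<Rightarrow> data \<Rightarrow> (nat \<Rightarrow> nat) \<Rightarrow> bool" where
  "is_LSNS n d \<sigma> sigs D p \<longleftrightarrow> p permutes {..<n} \<and>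
     (\<forall>q. q permutes {..<n} \<longrightarrow> LSNS_cost n d \<sigma> sigs D p \<le> LSNS_cost n d \<sigma> sigs D q)"

definition ext_ln :: "real \<Rightarrow> ereal" where
  "ext_ln x = (if x = 0 then -\<infinity> else ereal (ln x))"

definition LSL_cost :: "nat \<Rightarrow> nat \<Rightarrow> data \<Rightarrow> (nat \<Rightarrow> nat) \<Rightarrow> ereal" where
  "LSL_cost n d D p = (\<Sum>i<n. ext_ln ((vdist d (fst D (p i)) (snd D i))^2))"

definition is_LSL :: "nat \<Rightarrow> nat \<Rightarrow> data \<Rightarrow> (nat \<Rightarrow> nat) \<Rightarrow> bool" where
  "is_LSL n d D p \<longleftrightarrow> p permutes {..<n} \<and>
     (\<forall>q. q permutes {..<n} \<longrightarrow> LSL_cost n d D p \<le> LSL_cost n d D q)"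

end

theory Submission
  imports Defs
begin

text \<open>Outside the events \<open>\<parallel>X j - X\<^sup># i\<parallel> \<le> \<parallel>X (\<pi> i) - X\<^sup># i\<parallel>\<close> (for \<open>j \<noteq> \<pi> i\<close>) and
  \<open>X (\<pi> i) = X\<^sup># i\<close>, every row \<open>i\<close> of the distance matrix attains a strict and positive
  minimum at the true partner \<open>\<pi> i\<close>, and then each of the four estimators returns \<open>\<pi>\<close>.
  With a common noise level the difference of the two squared distances is a quadratic form
  in independent standard Gaussians whose exponential moments are explicit; a Chernoff bound
  with a parameter \<open>s \<le> 1/8\<close> gives each of these \<open>n\<^sup>2\<close> events probability at most \<open>\<alpha>/n\<^sup>2\<close>
  once the relative separation exceeds the threshold, and a union bound concludes.\<close>

abbreviation std_normal :: "real measure" where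
  "std_normal \<equiv> density lborel std_normal_density"

section \<open>Exponential moments of Gaussian quadratic forms\<close>

lemma nn_integral_normal_density:
  assumes "0 < s"
  shows "(\<integral>\<^sup>+x. ennreal (normal_density \<mu> s x) \<partial>lborel) = 1"
proof -
  interpret prob_space "density lborel (normal_density \<mu> s)"
    using prob_space_normal_density assms by auto
  show ?thesis
    using emeasure_space_1 by (simp add: emeasure_density)
qed

lemma nn_integral_std_normal_exp_quadratic:
  fixes a b :: real
  assumes a: "a < 1/2"
  shows "(\<integral>\<^sup>+x. ennreal (exp (a*x^2 + b*x)) \<partial>std_normal)
    = ennreal (exp (b^2/(2*(1-2*a))) / sqrt (1-2*a))"
proof -
  define c where "c = 1 - 2*a"
  define s where "s = 1 / sqrt c"
  define \<mu> where "\<mu> = b / c"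
  have c0: "c > 0" using a by (simp add: c_def)
  have s0: "s > 0" using c0 by (simp add: s_def)
  have s2: "s^2 = 1/c" using c0 by (simp add: s_def power_divide)
  have complete_square: "- x\<^sup>2 / 2 + (a*x^2 + b*x) = b^2/(2*c) + (-(x - \<mu>)\<^sup>2/ (2 * s\<^sup>2))" for x
  proof -
    have aa: "a = (1-c)/2" by (simp add: c_def)
    show ?thesis
      using c0 unfolding s2 \<mu>_def aa by (simp add: field_simps power2_eq_square)
  qed
  have density_eq: "std_normal_density x * exp (a*x^2 + b*x)
      = (exp (b^2/(2*c)) * s) * normal_density \<mu> s x" for x
  proof -
    have "exp (- x\<^sup>2 / 2) * exp (a*x^2 + b*x) = exp (b^2/(2*c)) * exp (-(x - \<mu>)\<^sup>2/ (2 * s\<^sup>2))"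
      unfolding exp_add[symmetric] complete_square ..
    moreover have "sqrt (2 * pi * s\<^sup>2) = sqrt (2 * pi) * s"
      using s0 by (simp add: real_sqrt_mult)
    ultimately show ?thesis
      unfolding std_normal_density_def normal_density_def using s0 by (simp add: field_simps)
  qed
  have "(\<integral>\<^sup>+x. ennreal (exp (a*x^2 + b*x)) \<partial>std_normal)
      = (\<integral>\<^sup>+x. ennreal (std_normal_density x) * ennreal (exp (a*x^2 + b*x)) \<partial>lborel)"
    by (subst nn_integral_density) auto
  also have "\<dots> = (\<integral>\<^sup>+x. ennreal (exp (b^2/(2*c)) * s) * ennreal (normal_density \<mu> s x) \<partial>lborel)"
    using s0 by (intro nn_integral_cong) (simp add: density_eq[symmetric] ennreal_mult'[symmetric])
  also have "\<dots> = ennreal (exp (b^2/(2*c)) * s)"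
    by (subst nn_integral_cmult) (auto simp: nn_integral_normal_density s0)
  finally show ?thesis by (simp add: s_def c_def)
qed

lemma nn_integral_std_normal_mult_exp_quadratic:
  fixes a b K M :: real
  assumes a: "a < 1/2" and M: "0 \<le> M" and E: "\<And>x. E x = K + a*x^2 + b*x"
  shows "(\<integral>\<^sup>+x. ennreal (M * exp (E x)) \<partial>std_normal)
    = ennreal (M * exp (K + b^2/(2*(1-2*a))) / sqrt (1-2*a))"
proof -
  have "(\<integral>\<^sup>+x. ennreal (M * exp (E x)) \<partial>std_normal)
      = (\<integral>\<^sup>+x. ennreal (M * exp K) * ennreal (exp (a*x^2 + b*x)) \<partial>std_normal)"
    by (rule nn_integral_cong)
      (simp add: E exp_add[symmetric] ennreal_mult'[symmetric] M add.assoc mult.assoc)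
  also have "\<dots> = ennreal (M * exp K) * ennreal (exp (b^2/(2*(1-2*a))) / sqrt (1-2*a))"
    by (simp add: nn_integral_cmult nn_integral_std_normal_exp_quadratic[OF a])
  also have "\<dots> = ennreal (M * exp (K + b^2/(2*(1-2*a))) / sqrt (1-2*a))"
    by (subst ennreal_mult[symmetric]) (use a in \<open>auto simp: M exp_add mult.assoc\<close>)
  finally show ?thesis .
qed

text \<open>For independent standard normals \<open>a, b, c\<close>, the moment
  \<open>E exp (-s ((r + a - c)\<^sup>2 - (b - c)\<^sup>2))\<close> is computed by integrating out \<open>b\<close>, then \<open>a\<close>,
  then \<open>c\<close>; these are the intermediate closed forms.\<close>

definition mismatch_mgf_b :: "real \<Rightarrow> real \<Rightarrow> real \<Rightarrow> real \<Rightarrow> real" where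
  "mismatch_mgf_b s r a c =
     exp (-s*(r+a-c)^2 + s*c^2 + 2* s^2*c^2/(1-2* s)) / sqrt (1-2* s)"

definition mismatch_mgf_ab :: "real \<Rightarrow> real \<Rightarrow> real \<Rightarrow> real" where
  "mismatch_mgf_ab s r c =
     exp (-s*(r-c)^2 + s*c^2 + 2* s^2*c^2/(1-2* s) + 2* s^2*(r-c)^2/(1+2* s))
       / (sqrt (1-2* s) * sqrt (1+2* s))"

lemma nn_integral_mismatch_exp:
  assumes "0 < s" "s < 1/2"
  shows "(\<integral>\<^sup>+b. ennreal (exp (-s*((r+a-c)^2 - (b-c)^2))) \<partial>std_normal)
    = ennreal (mismatch_mgf_b s r a c)"
proof -
  have "(\<integral>\<^sup>+b. ennreal (1 * exp (-s*((r+a-c)^2 - (b-c)^2))) \<partial>std_normal)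
      = ennreal (1 * exp ((-s*(r+a-c)^2 + s*c^2) + (-2* s*c)^2/(2*(1-2* s))) / sqrt (1-2* s))"
    by (rule nn_integral_std_normal_mult_exp_quadratic)
      (use assms in \<open>auto simp: power2_eq_square algebra_simps\<close>)
  moreover have "(-2* s*c)^2/(2*(1-2* s)) = 2* s^2*c^2/(1-2* s)"
    using assms by (simp add: power2_eq_square field_simps)
  ultimately show ?thesis
    unfolding mismatch_mgf_b_def by (simp add: add.assoc)
qed

lemma nn_integral_mismatch_mgf_b:
  assumes "0 < s" "s < 1/2"
  shows "(\<integral>\<^sup>+a. ennreal (mismatch_mgf_b s r a c) \<partial>std_normal) = ennreal (mismatch_mgf_ab s r c)"
proof -
  have "(\<integral>\<^sup>+a. ennreal ((1/sqrt (1-2* s))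
          * exp (-s*(r+a-c)^2 + s*c^2 + 2* s^2*c^2/(1-2* s))) \<partial>std_normal)
      = ennreal ((1/sqrt (1-2* s)) * exp ((-s*(r-c)^2 + s*c^2 + 2* s^2*c^2/(1-2* s))
          + (-2* s*(r-c))^2/(2*(1-2*(-s)))) / sqrt (1-2*(-s)))"
    by (rule nn_integral_std_normal_mult_exp_quadratic)
      (use assms in \<open>auto simp: power2_eq_square algebra_simps\<close>)
  moreover have "(-2* s*(r-c))^2/(2*(1-2*(-s))) = 2* s^2*(r-c)^2/(1+2* s)"
    using assms by (simp add: power2_eq_square field_simps)
  ultimately show ?thesis
    unfolding mismatch_mgf_b_def mismatch_mgf_ab_def by (simp add: add.assoc)
qed

lemma mismatch_mgf_ab_eq_exp_quadratic:
  assumes "0 < s" "s < 1/2"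
  shows "mismatch_mgf_ab s r c = exp (- s*r^2/(1+2* s) + (s/(1-2* s) - s/(1+2* s))*c^2
      + 2* s*r/(1+2* s)*c) / (sqrt (1-2* s) * sqrt (1+2* s))"
proof -
  have "s*c^2 + 2* s^2*c^2/(1-2* s) = s*c^2/(1-2* s)"
    "-s*(r-c)^2 + 2* s^2*(r-c)^2/(1+2* s) = -s*(r-c)^2/(1+2* s)"
    using assms by (simp_all add: field_simps power2_eq_square)
  moreover have "s*c^2/(1-2* s) + -s*(r-c)^2/(1+2* s)
      = - s*r^2/(1+2* s) + (s/(1-2* s) - s/(1+2* s))*c^2 + 2* s*r/(1+2* s)*c"
    by (simp add: power2_eq_square diff_divide_distrib add_divide_distrib algebra_simps)
  ultimately show ?thesis
    unfolding mismatch_mgf_ab_def by (simp add: add.assoc)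
qed

lemma nn_integral_mismatch_mgf_ab:
  assumes s: "0 < s" "s \<le> 1/8"
  shows "(\<integral>\<^sup>+c. ennreal (mismatch_mgf_ab s r c) \<partial>std_normal)
    = ennreal (exp (r^2 * ((2* s^2*(1-2* s)/(1-12* s^2) - s)/(1+2* s))) / sqrt (1 - 12* s^2))"
proof -
  define A where "A = s/(1-2* s) - s/(1+2* s)"
  define B where "B = 2* s*r/(1+2* s)"
  define K where "K = - s*r^2/(1+2* s)"
  define M where "M = 1 / (sqrt (1-2* s) * sqrt (1+2* s))"
  have ssq: "s^2 \<le> 1/64"
    using power_mono[OF s(2), of 2] s by (simp add: power2_eq_square)
  have pos: "1 - 2* s > 0" "1 + 2* s > 0" "1 - 4* s^2 > 0" "1 - 12* s^2 > 0"
    using s ssq by auto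
  have A2: "1 - 2*A = (1 - 12* s^2)/(1-4* s^2)"
    using pos unfolding A_def by (simp add: field_simps power2_eq_square)
  have "(\<integral>\<^sup>+c. ennreal (mismatch_mgf_ab s r c) \<partial>std_normal)
      = (\<integral>\<^sup>+c. ennreal (M * exp (K + A*c^2 + B*c)) \<partial>std_normal)"
    using s by (simp add: mismatch_mgf_ab_eq_exp_quadratic A_def B_def K_def M_def)
  also have "\<dots> = ennreal (M * exp (K + B^2/(2*(1-2*A))) / sqrt (1-2*A))"
  proof (rule nn_integral_std_normal_mult_exp_quadratic)
    have "0 < 1 - 2*A" unfolding A2 using pos by simp
    then show "A < 1/2" by simp
  qed (use pos in \<open>simp_all add: M_def\<close>)
  also have "M * exp (K + B^2/(2*(1-2*A))) / sqrt (1-2*A)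
      = M / sqrt (1-2*A) * exp (K + B^2/(2*(1-2*A)))"
    by simp
  also have "M / sqrt (1-2*A) = 1 / sqrt (1 - 12* s^2)"
  proof -
    have "(1-2* s)*(1+2* s)*(1-2*A) = 1 - 12* s^2"
      unfolding A2 using pos by (simp add: field_simps power2_eq_square)
    then have "sqrt (1-2* s) * sqrt (1+2* s) * sqrt (1-2*A) = sqrt (1 - 12* s^2)"
      by (simp add: real_sqrt_mult[symmetric])
    then show ?thesis unfolding M_def by (simp add: field_simps)
  qed
  also have "K + B^2/(2*(1-2*A)) = r^2 * ((2* s^2*(1-2* s)/(1-12* s^2) - s)/(1+2* s))"
  proof -
    have f4: "1 - 4* s^2 = (1-2* s)*(1+2* s)" by (simp add: algebra_simps power2_eq_square)
    have nz: "1 + 2* s \<noteq> 0" "1 - 12* s^2 \<noteq> 0" "1 - 2* s \<noteq> 0" using pos by auto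
    have "B^2/(2*(1-2*A)) = 2* s^2*r^2*(1-2* s)/((1+2* s)*(1-12* s^2))"
      unfolding A2 f4 B_def using nz by (simp add: divide_simps power2_eq_square)
    then show ?thesis
      unfolding K_def using nz by (simp add: diff_divide_distrib add_divide_distrib algebra_simps)
  qed
  finally show ?thesis by simp
qed

lemma mismatch_closed_form_le:
  assumes s: "0 < s" "s \<le> 1/8"
  shows "exp (r^2 * ((2* s^2*(1-2* s)/(1-12* s^2) - s)/(1+2* s))) / sqrt (1 - 12* s^2)
    \<le> exp (8* s^2 - s*r^2/2)"
proof -
  have ssq: "s^2 \<le> 1/64"
    using power_mono[OF s(2), of 2] s by (simp add: power2_eq_square)
  have pos: "1 - 2* s > 0" "1 + 2* s > 0" "1 - 12* s^2 > 0"
    using s ssq by auto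
  have exponent: "(2* s^2*(1-2* s)/(1-12* s^2) - s)/(1+2* s) \<le> - s/2"
  proof -
    have "2* s^2*(1-2* s)*2 = s*(1-2* s)*(4* s)" by (simp add: power2_eq_square algebra_simps)
    also have "\<dots> \<le> s*(1-2* s)*(1 - 12* s^2)"
      using s ssq pos by (intro mult_left_mono) auto
    finally have "2* s^2*(1-2* s)/(1-12* s^2) \<le> s*(1-2* s)/2"
      using pos by (simp add: pos_divide_le_eq)
    hence "2* s^2*(1-2* s)/(1-12* s^2) - s \<le> (- s/2)*(1+2* s)" by (simp add: algebra_simps)
    thus ?thesis using pos by (simp add: pos_divide_le_eq)
  qed
  have prefactor: "1 / sqrt (1 - 12* s^2) \<le> exp (8* s^2)"
  proof -
    have "0 \<le> s^2 * (4 - 192* s^2)"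
      using ssq by (intro mult_nonneg_nonneg) auto
    hence "1 \<le> (1 + 16* s^2) * (1 - 12* s^2)"
      by (simp add: algebra_simps)
    hence "1 / (1 - 12* s^2) \<le> 1 + 16* s^2" using pos by (simp add: field_simps)
    also have "\<dots> \<le> exp (8* s^2)^2"
      using exp_ge_add_one_self[of "16* s^2"] by (simp add: exp_double[symmetric])
    finally have "sqrt (1 / (1 - 12* s^2)) \<le> sqrt (exp (8* s^2)^2)"
      by (rule real_sqrt_le_mono)
    thus ?thesis by (simp add: real_sqrt_divide)
  qed
  have "exp (r^2 * ((2* s^2*(1-2* s)/(1-12* s^2) - s)/(1+2* s))) \<le> exp (- s*r^2/2)"
    using mult_left_mono[OF exponent, of "r^2"] by (simp add: mult.commute)
  with prefactor
  have "1 / sqrt (1 - 12* s^2) * exp (r^2 * ((2* s^2*(1-2* s)/(1-12* s^2) - s)/(1+2* s)))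
      \<le> exp (8* s^2) * exp (- s*r^2/2)"
    by (intro mult_mono) auto
  thus ?thesis by (simp add: exp_add[symmetric])
qed

lemma nn_integral_coincidence_exp:
  assumes "0 < t"
  shows "(\<integral>\<^sup>+b. ennreal (exp (-t*(b-c)^2)) \<partial>std_normal)
    = ennreal (exp (-t*c^2/(1+2*t)) / sqrt (1+2*t))"
proof -
  have "(\<integral>\<^sup>+b. ennreal (1 * exp (-t*(b-c)^2)) \<partial>std_normal)
      = ennreal (1 * exp (-t*c^2 + (2*t*c)^2/(2*(1-2*(-t)))) / sqrt (1-2*(-t)))"
    by (rule nn_integral_std_normal_mult_exp_quadratic)
      (use assms in \<open>auto simp: power2_eq_square algebra_simps\<close>)
  moreover have "-t*c^2 + (2*t*c)^2/(2*(1-2*(-t))) = -t*c^2/(1+2*t)"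
    using assms by (simp add: power2_eq_square field_simps)
  ultimately show ?thesis by simp
qed

section \<open>Independent Gaussian vectors\<close>

lemma prob_space_std_normal: "prob_space std_normal"
  by (rule prob_space_normal_density) simp

lemma prob_space_gauss_vec: "prob_space (gauss_vec d)"
  unfolding gauss_vec_def by (intro prob_space_PiM prob_space_std_normal)

lemma prob_space_gauss_vecs: "prob_space (PiM {..<n} (\<lambda>_. gauss_vec d))"
  by (intro prob_space_PiM prob_space_gauss_vec)

lemma measurable_gauss_vec_component[measurable]:
  assumes "k \<in> {..<d}"
  shows "(\<lambda>x. x k) \<in> borel_measurable (gauss_vec d)"
proof -
  have "(\<lambda>x. x k) \<in> measurable (PiM {..<d} (\<lambda>_. std_normal)) std_normal"
    by (rule measurable_component_singleton[OF assms])
  moreover have "measurable (PiM {..<d} (\<lambda>_. std_normal)) std_normal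
      = measurable (PiM {..<d} (\<lambda>_. std_normal)) borel"
    by (rule measurable_cong_sets) simp_all
  ultimately show ?thesis
    unfolding gauss_vec_def by simp
qed

lemma measurable_noise_fst_component:
  assumes "j \<in> {..<n}" "k \<in> {..<d}"
  shows "(\<lambda>\<omega>. fst \<omega> j k) \<in> borel_measurable (noise n d)"
proof -
  have "(\<lambda>\<omega>. fst \<omega> j) \<in> measurable (noise n d) (gauss_vec d)"
    unfolding noise_def
    by (rule measurable_compose[OF measurable_fst measurable_component_singleton[OF assms(1)]])
  from measurable_compose[OF this measurable_gauss_vec_component[OF assms(2)]] show ?thesis .
qed

lemma measurable_noise_snd_component:
  assumes "j \<in> {..<n}" "k \<in> {..<d}"
  shows "(\<lambda>\<omega>. snd \<omega> j k) \<in> borel_measurable (noise n d)"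
proof -
  have "(\<lambda>\<omega>. snd \<omega> j) \<in> measurable (noise n d) (gauss_vec d)"
    unfolding noise_def
    by (rule measurable_compose[OF measurable_snd measurable_component_singleton[OF assms(1)]])
  from measurable_compose[OF this measurable_gauss_vec_component[OF assms(2)]] show ?thesis .
qed

lemma nn_integral_gauss_vec_prod:
  assumes "\<And>k. k < d \<Longrightarrow> g k \<in> borel_measurable borel"
  shows "(\<integral>\<^sup>+x. (\<Prod>k<d. g k (x k)) \<partial>gauss_vec d) = (\<Prod>k<d. \<integral>\<^sup>+t. g k t \<partial>std_normal)"
proof -
  interpret product_sigma_finite "\<lambda>_::nat. std_normal"
    by (simp add: product_sigma_finite_def prob_space_imp_sigma_finite prob_space_std_normal)
  show ?thesis
    unfolding gauss_vec_def by (rule product_nn_integral_prod) (simp_all add: assms)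
qed

lemma nn_integral_PiM_component:
  assumes "prob_space M" "i \<in> I" "f \<in> borel_measurable M"
  shows "(\<integral>\<^sup>+\<omega>. f (\<omega> i) \<partial>PiM I (\<lambda>_. M)) = (\<integral>\<^sup>+x. f x \<partial>M)"
proof -
  have distr: "distr (PiM I (\<lambda>_. M)) M (\<lambda>\<omega>. \<omega> i) = M"
    by (rule distr_PiM_component) (use assms in auto)
  have "(\<integral>\<^sup>+x. f x \<partial>M) = (\<integral>\<^sup>+x. f x \<partial>distr (PiM I (\<lambda>_. M)) M (\<lambda>\<omega>. \<omega> i))"
    by (simp add: distr)
  also have "\<dots> = (\<integral>\<^sup>+\<omega>. f (\<omega> i) \<partial>PiM I (\<lambda>_. M))"
    by (rule nn_integral_distr) (simp_all add: distr assms measurable_component_singleton)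
  finally show ?thesis ..
qed

lemma nn_integral_PiM_two_components:
  assumes M: "prob_space M" and I: "finite I" "j \<in> I" "m \<in> I" "j \<noteq> m"
    and f[measurable]: "(\<lambda>(x,y). f x y) \<in> borel_measurable (M \<Otimes>\<^sub>M M)"
  shows "(\<integral>\<^sup>+\<omega>. f (\<omega> j) (\<omega> m) \<partial>PiM I (\<lambda>_. M)) = (\<integral>\<^sup>+x. \<integral>\<^sup>+y. f x y \<partial>M \<partial>M)"
proof -
  interpret product_sigma_finite "\<lambda>_::'i. M"
    by (simp add: product_sigma_finite_def prob_space_imp_sigma_finite M)
  interpret sigma_finite_measure M using prob_space_imp_sigma_finite[OF M] .
  have I_eq: "I = insert m (I - {m})" using I by auto
  have "(\<lambda>\<omega>. (\<omega> j, \<omega> m)) \<in> measurable (PiM I (\<lambda>_. M)) (M \<Otimes>\<^sub>M M)"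
    using I by (intro measurable_Pair measurable_component_singleton) auto
  from measurable_comp[OF this f]
  have "(\<lambda>\<omega>. f (\<omega> j) (\<omega> m)) \<in> borel_measurable (PiM (insert m (I - {m})) (\<lambda>_. M))"
    by (simp only: comp_def I_eq[symmetric] case_prod_conv)
  from product_nn_integral_insert[OF _ _ this]
  have "(\<integral>\<^sup>+\<omega>. f (\<omega> j) (\<omega> m) \<partial>PiM (insert m (I - {m})) (\<lambda>_. M))
      = (\<integral>\<^sup>+\<omega>. (\<integral>\<^sup>+y. f (fun_upd \<omega> m y j) (fun_upd \<omega> m y m) \<partial>M) \<partial>PiM (I - {m}) (\<lambda>_. M))"
    using I by simp
  then have "(\<integral>\<^sup>+\<omega>. f (\<omega> j) (\<omega> m) \<partial>PiM I (\<lambda>_. M))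
      = (\<integral>\<^sup>+\<omega>. (\<integral>\<^sup>+y. f (fun_upd \<omega> m y j) (fun_upd \<omega> m y m) \<partial>M) \<partial>PiM (I - {m}) (\<lambda>_. M))"
    by (simp only: I_eq[symmetric])
  also have "\<dots> = (\<integral>\<^sup>+\<omega>. (\<lambda>x. \<integral>\<^sup>+y. f x y \<partial>M) (\<omega> j) \<partial>PiM (I - {m}) (\<lambda>_. M))"
    using I(4) by simp
  also have "\<dots> = (\<integral>\<^sup>+x. \<integral>\<^sup>+y. f x y \<partial>M \<partial>M)"
    using I by (intro nn_integral_PiM_component[OF M _ borel_measurable_nn_integral[OF f]]) simp
  finally show ?thesis .
qed

text \<open>The components \<open>\<xi>\<^sub>j\<close>, \<open>\<xi>\<^sub>m\<close> and \<open>\<xi>\<^sup>#\<^sub>i\<close> of the noise are independent standard Gaussian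
  vectors as soon as \<open>j \<noteq> m\<close>.\<close>

lemma nn_integral_noise_three_components:
  fixes H :: "(nat \<Rightarrow> real) \<Rightarrow> (nat \<Rightarrow> real) \<Rightarrow> (nat \<Rightarrow> real) \<Rightarrow> ennreal"
  assumes ij: "j < n" "m < n" "i < n" "j \<noteq> m"
    and H_meas: "(\<lambda>\<omega>. H (fst \<omega> j) (fst \<omega> m) (snd \<omega> i)) \<in> borel_measurable (noise n d)"
      "\<And>z. (\<lambda>p. H (fst p) (snd p) z) \<in> borel_measurable (gauss_vec d \<Otimes>\<^sub>M gauss_vec d)"
    and \<Phi>: "\<And>z. (\<integral>\<^sup>+x. \<integral>\<^sup>+y. H x y z \<partial>gauss_vec d \<partial>gauss_vec d) = \<Phi> z"
      "\<Phi> \<in> borel_measurable (gauss_vec d)"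
  shows "(\<integral>\<^sup>+\<omega>. H (fst \<omega> j) (fst \<omega> m) (snd \<omega> i) \<partial>noise n d) = (\<integral>\<^sup>+z. \<Phi> z \<partial>gauss_vec d)"
proof -
  let ?A = "PiM {..<n} (\<lambda>_. gauss_vec d)"
  interpret pair_sigma_finite ?A ?A
    by (simp add: pair_sigma_finite_def prob_space_imp_sigma_finite prob_space_gauss_vecs)
  have "(\<integral>\<^sup>+\<omega>. H (fst \<omega> j) (fst \<omega> m) (snd \<omega> i) \<partial>noise n d)
      = (\<integral>\<^sup>+b. \<integral>\<^sup>+a. H (a j) (a m) (b i) \<partial>?A \<partial>?A)"
    using nn_integral_snd[OF H_meas(1)[unfolded noise_def]] unfolding noise_def by simp
  also have "\<dots> = (\<integral>\<^sup>+b. \<integral>\<^sup>+x. \<integral>\<^sup>+y. H x y (b i) \<partial>gauss_vec d \<partial>gauss_vec d \<partial>?A)"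
  proof (rule nn_integral_cong)
    fix b
    have "(\<lambda>(x,y). H x y (b i)) \<in> borel_measurable (gauss_vec d \<Otimes>\<^sub>M gauss_vec d)"
      using H_meas(2)[of "b i"] by (simp add: case_prod_beta')
    then show "(\<integral>\<^sup>+a. H (a j) (a m) (b i) \<partial>?A)
        = (\<integral>\<^sup>+x. \<integral>\<^sup>+y. H x y (b i) \<partial>gauss_vec d \<partial>gauss_vec d)"
      using ij by (intro nn_integral_PiM_two_components[OF prob_space_gauss_vec]) auto
  qed
  also have "\<dots> = (\<integral>\<^sup>+b. \<Phi> (b i) \<partial>?A)" by (simp add: \<Phi>)
  also have "\<dots> = (\<integral>\<^sup>+z. \<Phi> z \<partial>gauss_vec d)"
    using ij by (intro nn_integral_PiM_component[OF prob_space_gauss_vec _ \<Phi>(2)]) auto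
  finally show ?thesis .
qed

lemma mismatch_mgf_b_measurable[measurable]: "(\<lambda>a. mismatch_mgf_b s r a c) \<in> borel_measurable borel"
  unfolding mismatch_mgf_b_def by measurable

lemma mismatch_mgf_ab_measurable[measurable]: "(\<lambda>c. mismatch_mgf_ab s r c) \<in> borel_measurable borel"
  unfolding mismatch_mgf_ab_def by measurable

lemma nn_integral_mismatch_chernoff_le:
  fixes r :: "nat \<Rightarrow> real"
  assumes ij: "j < n" "m < n" "i < n" "j \<noteq> m" and s: "0 < s" "s \<le> 1/8"
  shows "(\<integral>\<^sup>+\<omega>. (\<Prod>k<d. ennreal (exp (-s*((r k + fst \<omega> j k - snd \<omega> i k)^2
                                        - (fst \<omega> m k - snd \<omega> i k)^2)))) \<partial>noise n d)
     \<le> ennreal (exp (8 * real d * s^2 - s * (\<Sum>k<d. (r k)^2) / 2))"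
proof -
  define H where "H = (\<lambda>x y z. \<Prod>k<d. ennreal (exp (-s*((r k + (x::nat\<Rightarrow>real) k - z k)^2
                                                       - (y k - z k)^2))))"
  define \<Phi> where "\<Phi> = (\<lambda>z. \<Prod>k<d. ennreal (mismatch_mgf_ab s (r k) ((z::nat\<Rightarrow>real) k)))"
  have s2: "s < 1/2" using s by simp
  have [measurable]: "\<And>k. k \<in> {..<d} \<Longrightarrow> (\<lambda>\<omega>. fst \<omega> j k) \<in> borel_measurable (noise n d)"
    "\<And>k. k \<in> {..<d} \<Longrightarrow> (\<lambda>\<omega>. fst \<omega> m k) \<in> borel_measurable (noise n d)"
    "\<And>k. k \<in> {..<d} \<Longrightarrow> (\<lambda>\<omega>. snd \<omega> i k) \<in> borel_measurable (noise n d)"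
    using ij by (auto intro: measurable_noise_fst_component measurable_noise_snd_component)
  have "(\<integral>\<^sup>+x. \<integral>\<^sup>+y. H x y z \<partial>gauss_vec d \<partial>gauss_vec d) = \<Phi> z" for z
  proof -
    have "(\<integral>\<^sup>+y. H x y z \<partial>gauss_vec d) = (\<Prod>k<d. ennreal (mismatch_mgf_b s (r k) (x k) (z k)))"
      for x
    proof -
      have "(\<integral>\<^sup>+y. H x y z \<partial>gauss_vec d)
          = (\<Prod>k<d. \<integral>\<^sup>+b. ennreal (exp (-s*((r k + x k - z k)^2 - (b - z k)^2))) \<partial>std_normal)"
        unfolding H_def by (rule nn_integral_gauss_vec_prod) measurable
      also have "\<dots> = (\<Prod>k<d. ennreal (mismatch_mgf_b s (r k) (x k) (z k)))"
        by (rule prod.cong[OF refl]) (rule nn_integral_mismatch_exp[OF s(1) s2])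
      finally show ?thesis .
    qed
    then have "(\<integral>\<^sup>+x. \<integral>\<^sup>+y. H x y z \<partial>gauss_vec d \<partial>gauss_vec d)
        = (\<integral>\<^sup>+x. (\<Prod>k<d. ennreal (mismatch_mgf_b s (r k) (x k) (z k))) \<partial>gauss_vec d)"
      by simp
    also have "\<dots> = \<Phi> z"
      unfolding \<Phi>_def
      by (subst nn_integral_gauss_vec_prod)
        (simp_all add: nn_integral_mismatch_mgf_b[OF s(1) s2] del: mult_minus_left)
    finally show ?thesis .
  qed
  then have "(\<integral>\<^sup>+\<omega>. H (fst \<omega> j) (fst \<omega> m) (snd \<omega> i) \<partial>noise n d) = (\<integral>\<^sup>+z. \<Phi> z \<partial>gauss_vec d)"
    using ij unfolding H_def \<Phi>_def by (intro nn_integral_noise_three_components) measurable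
  also have "\<dots> = (\<Prod>k<d. \<integral>\<^sup>+c. ennreal (mismatch_mgf_ab s (r k) c) \<partial>std_normal)"
    unfolding \<Phi>_def by (rule nn_integral_gauss_vec_prod) measurable
  also have "\<dots> \<le> (\<Prod>k<d. ennreal (exp (8* s^2 - s*(r k)^2/2)))"
    using mismatch_closed_form_le[OF s]
    by (intro prod_mono_ennreal) (simp add: nn_integral_mismatch_mgf_ab[OF s])
  also have "\<dots> = ennreal (exp (\<Sum>k<d. 8* s^2 - s*(r k)^2/2))"
    by (simp add: prod_ennreal exp_sum)
  also have "(\<Sum>k<d. 8* s^2 - s*(r k)^2/2) = 8 * real d * s^2 - s * (\<Sum>k<d. (r k)^2) / 2"
    by (simp add: sum_subtractf sum_divide_distrib[symmetric] sum_distrib_left[symmetric])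
  finally show ?thesis unfolding H_def .
qed

lemma nn_integral_coincidence_chernoff_le:
  assumes ij: "j < n" "m < n" "i < n" "j \<noteq> m" and t: "0 < t"
  shows "(\<integral>\<^sup>+\<omega>. (\<Prod>k<d. ennreal (exp (-t*(fst \<omega> m k - snd \<omega> i k)^2))) \<partial>noise n d)
     \<le> ennreal ((1 / sqrt (1 + 2*t))^d)"
proof -
  define H where "H = (\<lambda>(x::nat\<Rightarrow>real) y z. \<Prod>k<d. ennreal (exp (-t*((y::nat\<Rightarrow>real) k - z k)^2)))"
  define \<Phi> where "\<Phi> = (\<lambda>z. \<Prod>k<d. ennreal (exp (-t*((z::nat\<Rightarrow>real) k)^2/(1+2*t)) / sqrt (1+2*t)))"
  interpret gauss_vec: prob_space "gauss_vec d" by (rule prob_space_gauss_vec)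
  have [measurable]: "\<And>k. k \<in> {..<d} \<Longrightarrow> (\<lambda>\<omega>. fst \<omega> m k) \<in> borel_measurable (noise n d)"
    "\<And>k. k \<in> {..<d} \<Longrightarrow> (\<lambda>\<omega>. snd \<omega> i k) \<in> borel_measurable (noise n d)"
    using ij by (auto intro: measurable_noise_fst_component measurable_noise_snd_component)
  have "(\<integral>\<^sup>+y. H x y z \<partial>gauss_vec d) = \<Phi> z" for x z
  proof -
    have "(\<integral>\<^sup>+y. H x y z \<partial>gauss_vec d)
        = (\<Prod>k<d. \<integral>\<^sup>+b. ennreal (exp (-t*(b - z k)^2)) \<partial>std_normal)"
      unfolding H_def by (rule nn_integral_gauss_vec_prod) measurable
    also have "\<dots> = \<Phi> z"
      unfolding \<Phi>_def by (rule prod.cong[OF refl]) (rule nn_integral_coincidence_exp[OF t])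
    finally show ?thesis .
  qed
  then have "(\<integral>\<^sup>+x. \<integral>\<^sup>+y. H x y z \<partial>gauss_vec d \<partial>gauss_vec d) = \<Phi> z" for z :: "nat \<Rightarrow> real"
    by (simp add: gauss_vec.emeasure_space_1)
  then have "(\<integral>\<^sup>+\<omega>. H (fst \<omega> j) (fst \<omega> m) (snd \<omega> i) \<partial>noise n d) = (\<integral>\<^sup>+z. \<Phi> z \<partial>gauss_vec d)"
    using ij unfolding H_def \<Phi>_def by (intro nn_integral_noise_three_components) measurable
  also have "\<dots> \<le> (\<integral>\<^sup>+z. ennreal ((1 / sqrt (1 + 2*t))^d) \<partial>gauss_vec d)"
  proof (rule nn_integral_mono)
    fix z :: "nat \<Rightarrow> real"
    have "exp (-t*(z k)^2/(1+2*t)) \<le> 1" for k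
      using t by (simp add: divide_nonpos_pos)
    then have "\<Phi> z \<le> (\<Prod>k<d. ennreal (1 / sqrt (1 + 2*t)))"
      unfolding \<Phi>_def using t by (intro prod_mono_ennreal) (simp add: ennreal_leI divide_right_mono)
    then show "\<Phi> z \<le> ennreal ((1 / sqrt (1 + 2*t))^d)"
      using t by (simp add: prod_ennreal ennreal_power)
  qed
  also have "\<dots> = ennreal ((1 / sqrt (1 + 2*t))^d)"
    by (simp add: gauss_vec.emeasure_space_1)
  finally show ?thesis unfolding H_def by simp
qed

section \<open>Chernoff bounds for the bad events\<close>

definition noisy_sqdist :: "nat \<Rightarrow> vecs \<Rightarrow> real \<Rightarrow> (nat \<Rightarrow> nat) \<Rightarrow> data \<Rightarrow> nat \<Rightarrow> nat \<Rightarrow> real" where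
  "noisy_sqdist d \<theta> \<sigma> \<pi> \<omega> i j =
     (\<Sum>k<d. (\<theta> j k + \<sigma> * fst \<omega> j k - (\<theta> (\<pi> i) k + \<sigma> * snd \<omega> i k))^2)"

definition bad_event :: "nat \<Rightarrow> nat \<Rightarrow> vecs \<Rightarrow> real \<Rightarrow> (nat \<Rightarrow> nat) \<Rightarrow> nat \<Rightarrow> nat \<Rightarrow> data set" where
  "bad_event n d \<theta> \<sigma> \<pi> i j = {\<omega> \<in> space (noise n d).
     if j = \<pi> i then noisy_sqdist d \<theta> \<sigma> \<pi> \<omega> i j \<le> 0
     else noisy_sqdist d \<theta> \<sigma> \<pi> \<omega> i j \<le> noisy_sqdist d \<theta> \<sigma> \<pi> \<omega> i (\<pi> i)}"

lemma vdist_obs: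
  assumes "i < n" "j < n"
  shows "vdist d (fst (obs n d \<theta> (\<lambda>_. \<sigma>) \<pi> \<omega>) j) (snd (obs n d \<theta> (\<lambda>_. \<sigma>) \<pi> \<omega>) i)
    = sqrt (noisy_sqdist d \<theta> \<sigma> \<pi> \<omega> i j)"
  unfolding vdist_def noisy_sqdist_def obs_def using assms
  by (auto intro!: arg_cong[where f=sqrt] sum.cong)

lemma obs_in_data_space: "obs n d \<theta> \<sigma> \<pi> \<omega> \<in> space (data_space n d)"
  by (simp add: data_space_def obs_def space_pair_measure space_PiM)

lemma borel_measurable_noisy_sqdist:
  assumes "i < n" "j < n"
  shows "(\<lambda>\<omega>. noisy_sqdist d \<theta> \<sigma> \<pi> \<omega> i j) \<in> borel_measurable (noise n d)"
proof -
  have [measurable]: "\<And>k. k \<in> {..<d} \<Longrightarrow> (\<lambda>\<omega>. fst \<omega> j k) \<in> borel_measurable (noise n d)"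
    "\<And>k. k \<in> {..<d} \<Longrightarrow> (\<lambda>\<omega>. snd \<omega> i k) \<in> borel_measurable (noise n d)"
    using assms by (auto intro: measurable_noise_fst_component measurable_noise_snd_component)
  show ?thesis unfolding noisy_sqdist_def by measurable
qed

lemma sets_bad_event:
  assumes "i < n" "j < n" "\<pi> i < n"
  shows "bad_event n d \<theta> \<sigma> \<pi> i j \<in> sets (noise n d)"
proof -
  have [measurable]: "(\<lambda>\<omega>. noisy_sqdist d \<theta> \<sigma> \<pi> \<omega> i j) \<in> borel_measurable (noise n d)"
    "(\<lambda>\<omega>. noisy_sqdist d \<theta> \<sigma> \<pi> \<omega> i (\<pi> i)) \<in> borel_measurable (noise n d)"
    using assms by (auto intro: borel_measurable_noisy_sqdist)
  show ?thesis unfolding bad_event_def by measurable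
qed

lemma emeasure_nonpos_le_nn_integral_exp:
  assumes [measurable]: "F \<in> borel_measurable M" and c: "0 \<le> c"
  shows "emeasure M {\<omega>\<in>space M. F \<omega> \<le> 0} \<le> (\<integral>\<^sup>+\<omega>. ennreal (exp (-c * F \<omega>)) \<partial>M)"
proof -
  have "emeasure M {\<omega>\<in>space M. F \<omega> \<le> 0} = (\<integral>\<^sup>+\<omega>. indicator {\<omega>\<in>space M. F \<omega> \<le> 0} \<omega> \<partial>M)"
    by simp
  also have "\<dots> \<le> (\<integral>\<^sup>+\<omega>. ennreal (exp (-c * F \<omega>)) \<partial>M)"
  proof (rule nn_integral_mono)
    fix \<omega>
    have "F \<omega> \<le> 0 \<Longrightarrow> 1 \<le> exp (-c * F \<omega>)"
      using c by (simp add: mult_nonneg_nonpos)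
    then show "indicator {\<omega>\<in>space M. F \<omega> \<le> 0} \<omega> \<le> ennreal (exp (-c * F \<omega>))"
      by (auto simp: indicator_def ennreal_leI)
  qed
  finally show ?thesis .
qed

lemma emeasure_mismatch_le:
  assumes ij: "i < n" "j < n" "\<pi> i < n" "j \<noteq> \<pi> i" and \<sigma>: "\<sigma> > 0" and s: "0 < s" "s \<le> 1/8"
  shows "emeasure (noise n d)
      {\<omega>\<in>space (noise n d). noisy_sqdist d \<theta> \<sigma> \<pi> \<omega> i j \<le> noisy_sqdist d \<theta> \<sigma> \<pi> \<omega> i (\<pi> i)}
    \<le> ennreal (exp (8 * real d * s^2 - s * (\<Sum>k<d. ((\<theta> j k - \<theta> (\<pi> i) k)/\<sigma>)^2) / 2))"
proof -
  define m where "m = \<pi> i"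
  define r where "r = (\<lambda>k. (\<theta> j k - \<theta> m k)/\<sigma>)"
  define F where "F = (\<lambda>\<omega>. noisy_sqdist d \<theta> \<sigma> \<pi> \<omega> i j - noisy_sqdist d \<theta> \<sigma> \<pi> \<omega> i m)"
  have "F \<in> borel_measurable (noise n d)"
    unfolding F_def m_def using ij by (intro borel_measurable_diff borel_measurable_noisy_sqdist)
  then have "emeasure (noise n d) {\<omega>\<in>space (noise n d). F \<omega> \<le> 0}
      \<le> (\<integral>\<^sup>+\<omega>. ennreal (exp (-(s/\<sigma>^2) * F \<omega>)) \<partial>noise n d)"
    using s \<sigma> by (intro emeasure_nonpos_le_nn_integral_exp) simp_all
  also have "\<dots> = (\<integral>\<^sup>+\<omega>. (\<Prod>k<d. ennreal (exp (- s*((r k + fst \<omega> j k - snd \<omega> i k)^2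
                                             - (fst \<omega> m k - snd \<omega> i k)^2)))) \<partial>noise n d)"
  proof (rule nn_integral_cong)
    fix \<omega>
    have "(\<theta> j k + \<sigma> * fst \<omega> j k - (\<theta> m k + \<sigma> * snd \<omega> i k))^2
          - (\<theta> m k + \<sigma> * fst \<omega> m k - (\<theta> m k + \<sigma> * snd \<omega> i k))^2
        = \<sigma>^2 * ((r k + fst \<omega> j k - snd \<omega> i k)^2 - (fst \<omega> m k - snd \<omega> i k)^2)" for k
    proof -
      have j: "\<theta> j k + \<sigma> * fst \<omega> j k - (\<theta> m k + \<sigma> * snd \<omega> i k) = \<sigma> * (r k + fst \<omega> j k - snd \<omega> i k)"
        unfolding r_def using \<sigma> by (simp add: field_simps)
      have m: "\<theta> m k + \<sigma> * fst \<omega> m k - (\<theta> m k + \<sigma> * snd \<omega> i k) = \<sigma> * (fst \<omega> m k - snd \<omega> i k)"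
        by (simp add: algebra_simps)
      show ?thesis unfolding j m power_mult_distrib by (rule right_diff_distrib[symmetric])
    qed
    then have "F \<omega> = (\<Sum>k<d. \<sigma>^2 * ((r k + fst \<omega> j k - snd \<omega> i k)^2 - (fst \<omega> m k - snd \<omega> i k)^2))"
      unfolding F_def noisy_sqdist_def m_def sum_subtractf[symmetric] by simp
    then have "-(s/\<sigma>^2) * F \<omega>
        = (\<Sum>k<d. - s*((r k + fst \<omega> j k - snd \<omega> i k)^2 - (fst \<omega> m k - snd \<omega> i k)^2))"
      using \<sigma> by (simp add: sum_distrib_left)
    then show "ennreal (exp (-(s/\<sigma>^2) * F \<omega>))
        = (\<Prod>k<d. ennreal (exp (- s*((r k + fst \<omega> j k - snd \<omega> i k)^2 - (fst \<omega> m k - snd \<omega> i k)^2))))"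
      by (simp add: exp_sum prod_ennreal)
  qed
  also have "\<dots> \<le> ennreal (exp (8 * real d * s^2 - s * (\<Sum>k<d. (r k)^2) / 2))"
    using ij s by (intro nn_integral_mismatch_chernoff_le) (auto simp: m_def)
  finally show ?thesis
    unfolding r_def m_def F_def by simp
qed

lemma emeasure_coincidence_le:
  assumes ij: "i < n" "j < n" "\<pi> i < n" "j \<noteq> \<pi> i" and \<sigma>: "\<sigma> > 0" and t: "0 < t"
  shows "emeasure (noise n d) {\<omega>\<in>space (noise n d). noisy_sqdist d \<theta> \<sigma> \<pi> \<omega> i (\<pi> i) \<le> 0}
    \<le> ennreal ((1 / sqrt (1 + 2*t))^d)"
proof -
  define m where "m = \<pi> i"
  have "emeasure (noise n d) {\<omega>\<in>space (noise n d). noisy_sqdist d \<theta> \<sigma> \<pi> \<omega> i m \<le> 0}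
     \<le> (\<integral>\<^sup>+\<omega>. ennreal (exp (-(t/\<sigma>^2) * noisy_sqdist d \<theta> \<sigma> \<pi> \<omega> i m)) \<partial>noise n d)"
    using ij t \<sigma> unfolding m_def
    by (intro emeasure_nonpos_le_nn_integral_exp borel_measurable_noisy_sqdist) simp_all
  also have "\<dots> = (\<integral>\<^sup>+\<omega>. (\<Prod>k<d. ennreal (exp (-t*(fst \<omega> m k - snd \<omega> i k)^2))) \<partial>noise n d)"
  proof (rule nn_integral_cong)
    fix \<omega>
    have "noisy_sqdist d \<theta> \<sigma> \<pi> \<omega> i m = (\<Sum>k<d. \<sigma>^2 * (fst \<omega> m k - snd \<omega> i k)^2)"
      unfolding noisy_sqdist_def m_def
      by (rule sum.cong) (simp_all add: power_mult_distrib[symmetric] algebra_simps)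
    then have "-(t/\<sigma>^2) * noisy_sqdist d \<theta> \<sigma> \<pi> \<omega> i m = (\<Sum>k<d. -t*(fst \<omega> m k - snd \<omega> i k)^2)"
      using \<sigma> by (simp add: sum_distrib_left)
    then show "ennreal (exp (-(t/\<sigma>^2) * noisy_sqdist d \<theta> \<sigma> \<pi> \<omega> i m))
        = (\<Prod>k<d. ennreal (exp (-t*(fst \<omega> m k - snd \<omega> i k)^2)))"
      by (simp add: exp_sum prod_ennreal)
  qed
  also have "\<dots> \<le> ennreal ((1 / sqrt (1 + 2*t))^d)"
    using ij t by (intro nn_integral_coincidence_chernoff_le[where j=j]) (auto simp: m_def)
  finally show ?thesis unfolding m_def .
qed

lemma exists_chernoff_parameter:
  fixes d R B L :: real
  assumes d: "1 \<le> d" and R: "2*B^2 < R" and L: "0 \<le> L" "32*L \<le> B^2" "256*d*L \<le> B^4"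
  shows "\<exists>s. 0 < s \<and> s \<le> 1/8 \<and> 8*d* s^2 - s*R/2 \<le> -L"
proof (cases "R/(32*d) \<le> 1/8")
  case True
  have "0 < R" using R by (smt (verit) zero_le_power2)
  have "4*B^4 < R^2"
    using power_strict_mono[OF R, of 2] by (simp add: power_mult_distrib power2_eq_square power4_eq_xxxx)
  moreover have "0 \<le> d*L" using L d by simp
  ultimately have "128*d*L \<le> R^2" using L(3) by (simp add: mult.assoc)
  then have "8*d*(R/(32*d))^2 - (R/(32*d))*R/2 \<le> -L"
    using d by (simp add: field_simps power2_eq_square)
  then show ?thesis using True \<open>0 < R\<close> d by (intro exI[of _ "R/(32*d)"]) simp
next
  case False
  then have "4*d < R" using d by (simp add: field_simps)
  then have "8*d*(1/8)^2 - (1/8)*R/2 \<le> -L" using R L by (simp add: power2_eq_square)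
  then show ?thesis by (intro exI[of _ "1/8"]) simp
qed

lemma rel_sep_less_vdist:
  assumes "B < rel_sep n d \<theta> \<sigma>" "i < n" "j < n" "i \<noteq> j"
  shows "B < vdist d (\<theta> i) (\<theta> j) / sqrt ((\<sigma> i)^2 + (\<sigma> j)^2)"
proof -
  let ?S = "{vdist d (\<theta> i) (\<theta> j) / sqrt ((\<sigma> i)^2 + (\<sigma> j)^2) | i j. i < n \<and> j < n \<and> i \<noteq> j}"
  have "?S \<subseteq> (\<lambda>(i,j). vdist d (\<theta> i) (\<theta> j) / sqrt ((\<sigma> i)^2 + (\<sigma> j)^2)) ` ({..<n} \<times> {..<n})"
    by auto
  then have "finite ?S" by (rule finite_subset) simp
  moreover have "vdist d (\<theta> i) (\<theta> j) / sqrt ((\<sigma> i)^2 + (\<sigma> j)^2) \<in> ?S"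
    using assms(2-4) by blast
  ultimately show ?thesis
    using assms(1) unfolding rel_sep_def by (meson Min_le less_le_trans)
qed

lemma rel_sep_homoscedastic_less:
  assumes sep: "B < rel_sep n d \<theta> (\<lambda>_. \<sigma>)" and B: "0 \<le> B" and \<sigma>: "\<sigma> > 0"
    and jm: "j < n" "m < n" "j \<noteq> m"
  shows "2 * B^2 < (\<Sum>k<d. ((\<theta> j k - \<theta> m k)/\<sigma>)^2)"
proof -
  define V where "V = (\<Sum>k<d. (\<theta> j k - \<theta> m k)^2)"
  have "sqrt (\<sigma>^2 + \<sigma>^2) = \<sigma> * sqrt 2"
    using \<sigma> by (simp add: real_sqrt_mult mult_2[symmetric])
  then have "B < sqrt V / (\<sigma> * sqrt 2)"
    using rel_sep_less_vdist[OF sep jm] unfolding vdist_def V_def by simp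
  then have "B * (\<sigma> * sqrt 2) < sqrt V" using \<sigma> by (simp add: pos_less_divide_eq)
  then have "(B * (\<sigma> * sqrt 2))^2 < (sqrt V)^2"
    using B \<sigma> by (intro power_strict_mono) auto
  then have "2 * B^2 * \<sigma>^2 < V"
    unfolding V_def by (simp add: power_mult_distrib sum_nonneg)
  then show ?thesis
    using \<sigma> unfolding V_def by (simp add: power_divide sum_divide_distrib[symmetric] pos_less_divide_eq)
qed

text \<open>The coincidence event has probability zero; the crude Chernoff bound suffices.\<close>

lemma emeasure_bad_event_le:
  assumes n: "2 \<le> n" and d: "1 \<le> d" and \<sigma>: "\<sigma> > 0" and \<pi>: "\<pi> permutes {..<n}"
    and ij: "i < n" "j < n" and q: "1 < q"
    and B: "0 \<le> B" "32 * ln q \<le> B^2" "256 * real d * ln q \<le> B^4"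
    and sep: "B < rel_sep n d \<theta> (\<lambda>_. \<sigma>)"
  shows "emeasure (noise n d) (bad_event n d \<theta> \<sigma> \<pi> i j) \<le> ennreal (1 / q)"
proof -
  have \<pi>i: "\<pi> i < n" using permutes_in_image[OF \<pi>] ij by simp
  show ?thesis
  proof (cases "j = \<pi> i")
    case True
    define j' where "j' = (if \<pi> i = 0 then 1 else (0::nat))"
    have j': "j' < n" "j' \<noteq> \<pi> i" unfolding j'_def using n by auto
    have t: "0 < (q^2 - 1) / 2" using q by (simp add: power_less_one_iff)
    have "emeasure (noise n d) (bad_event n d \<theta> \<sigma> \<pi> i j)
        \<le> ennreal ((1 / sqrt (1 + 2 * ((q^2 - 1) / 2)))^d)"
      unfolding bad_event_def using True emeasure_coincidence_le[where \<pi>=\<pi>, OF ij(1) j'(1) \<pi>i j'(2) \<sigma> t]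
      by simp
    also have "1 + 2 * ((q^2 - 1) / 2) = q^2" by (simp add: diff_divide_distrib)
    also have "sqrt (q^2) = q" using q by simp
    also have "(1 / q)^d \<le> 1 / q"
      using power_decreasing[of 1 d "1 / q"] d q by simp
    finally show ?thesis by (simp add: ennreal_leI)
  next
    case False
    have "\<exists>s. 0 < s \<and> s \<le> 1/8 \<and>
        8 * real d * s^2 - s * (\<Sum>k<d. ((\<theta> j k - \<theta> (\<pi> i) k)/\<sigma>)^2) / 2 \<le> - ln q"
      using d q
      by (intro exists_chernoff_parameter[OF _ rel_sep_homoscedastic_less[OF sep B(1) \<sigma> ij(2) \<pi>i False]
            _ B(2,3)]) auto
    then obtain s where s: "0 < s" "s \<le> 1/8"
      "8 * real d * s^2 - s * (\<Sum>k<d. ((\<theta> j k - \<theta> (\<pi> i) k)/\<sigma>)^2) / 2 \<le> - ln q"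
      by blast
    have "emeasure (noise n d) (bad_event n d \<theta> \<sigma> \<pi> i j)
        \<le> ennreal (exp (8 * real d * s^2 - s * (\<Sum>k<d. ((\<theta> j k - \<theta> (\<pi> i) k)/\<sigma>)^2) / 2))"
      unfolding bad_event_def using False emeasure_mismatch_le[where \<pi>=\<pi> and \<theta>=\<theta> and d=d, OF ij \<pi>i False \<sigma> s(1,2)] by simp
    also have "\<dots> \<le> ennreal (exp (- ln q))" using s(3) by (intro ennreal_leI) simp
    also have "exp (- ln q) = 1 / q" using q by (simp add: exp_minus inverse_eq_divide)
    finally show ?thesis .
  qed
qed

section \<open>Estimators at strictly nearest partners\<close>

lemma permutes_lessThan_eqI:
  assumes "p permutes {..<n}" "\<pi> permutes {..<n}" "\<And>i. i < n \<Longrightarrow> p i = \<pi> i"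
  shows "p = \<pi>"
proof
  fix x
  show "p x = \<pi> x"
    using assms by (cases "x < n") (auto simp: permutes_def)
qed

lemma greedy_eq_of_strict_row_minima:
  fixes \<delta> :: "nat \<Rightarrow> nat \<Rightarrow> real"
  assumes p: "p permutes {..<n}" and \<pi>: "\<pi> permutes {..<n}"
    and min: "\<And>i j. i < n \<Longrightarrow> j < n \<Longrightarrow> j \<noteq> \<pi> i \<Longrightarrow> \<delta> i (\<pi> i) < \<delta> i j"
    and greedy: "\<And>i j. i < n \<Longrightarrow> j < n \<Longrightarrow> j \<notin> p ` {..<i} \<Longrightarrow> \<delta> i (p i) \<le> \<delta> i j"
  shows "p = \<pi>"
proof -
  have "i < n \<Longrightarrow> p i = \<pi> i" for i
  proof (induction i rule: less_induct)
    case (less i)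
    then have "p ` {..<i} = \<pi> ` {..<i}" by auto
    moreover have "\<pi> i \<notin> \<pi> ` {..<i}"
      using permutes_inj[OF \<pi>] by (auto dest: injD)
    ultimately have "\<delta> i (p i) \<le> \<delta> i (\<pi> i)"
      using greedy less.prems permutes_in_image[OF \<pi>] by simp
    then show "p i = \<pi> i"
      using min[of i "p i"] less.prems permutes_in_image[OF p] by force
  qed
  then show ?thesis using permutes_lessThan_eqI[OF p \<pi>] by blast
qed

lemma sum_less_of_strict_row_minima:
  fixes g :: "nat \<Rightarrow> nat \<Rightarrow> real"
  assumes p: "p permutes {..<n}" and \<pi>: "\<pi> permutes {..<n}" and "p \<noteq> \<pi>"
    and min: "\<And>i j. i < n \<Longrightarrow> j < n \<Longrightarrow> j \<noteq> \<pi> i \<Longrightarrow> g i (\<pi> i) < g i j"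
  shows "(\<Sum>i<n. g i (\<pi> i)) < (\<Sum>i<n. g i (p i))"
proof (rule sum_strict_mono_ex1)
  have p_in: "i < n \<Longrightarrow> p i < n" for i using permutes_in_image[OF p] by simp
  show "\<forall>i\<in>{..<n}. g i (\<pi> i) \<le> g i (p i)"
    using min p_in by (metis lessThan_iff order.order_iff_strict)
  obtain i where "i < n" "p i \<noteq> \<pi> i" using permutes_lessThan_eqI[OF p \<pi>] \<open>p \<noteq> \<pi>\<close> by blast
  then show "\<exists>i\<in>{..<n}. g i (\<pi> i) < g i (p i)" using min p_in by auto
qed simp

definition strict_nearest :: "nat \<Rightarrow> nat \<Rightarrow> data \<Rightarrow> (nat \<Rightarrow> nat) \<Rightarrow> bool" where
  "strict_nearest n d D \<pi> \<longleftrightarrow> (\<forall>i<n. \<forall>j<n. j \<noteq> \<pi> i \<longrightarrow>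
     vdist d (fst D (\<pi> i)) (snd D i) < vdist d (fst D j) (snd D i))"

lemma vdist_nonneg: "0 \<le> vdist d x y"
  by (simp add: vdist_def sum_nonneg)

lemma LSS_cost_less_of_strict_nearest:
  assumes "p permutes {..<n}" "\<pi> permutes {..<n}" "p \<noteq> \<pi>" "strict_nearest n d D \<pi>"
  shows "LSS_cost n d D \<pi> < LSS_cost n d D p"
  unfolding LSS_cost_def using assms(4) vdist_nonneg
  by (intro sum_less_of_strict_row_minima[OF assms(1-3)] power_strict_mono)
    (auto simp: strict_nearest_def)

lemma LSNS_cost_homoscedastic:
  "LSNS_cost n d (\<lambda>_. \<sigma>) (\<lambda>_. \<sigma>) D p = LSS_cost n d D p / (\<sigma>^2 + \<sigma>^2)"
  unfolding LSNS_cost_def LSS_cost_def by (simp add: sum_divide_distrib)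

lemma LSL_cost_eq_sum_ln:
  assumes "\<And>i. i < n \<Longrightarrow> 0 < vdist d (fst D (p i)) (snd D i)"
  shows "LSL_cost n d D p = ereal (\<Sum>i<n. ln ((vdist d (fst D (p i)) (snd D i))^2))"
  unfolding LSL_cost_def ext_ln_def sum_ereal[symmetric]
  by (intro sum.cong) (auto dest!: assms)

text \<open>Positivity of the distances is needed only here: the log-likelihood cost is \<open>-\<infinity>\<close>
  as soon as some distance vanishes.\<close>

lemma LSL_cost_less_of_strict_nearest:
  assumes p: "p permutes {..<n}" and \<pi>: "\<pi> permutes {..<n}" and "p \<noteq> \<pi>"
    and near: "strict_nearest n d D \<pi>" and pos: "\<And>i. i < n \<Longrightarrow> 0 < vdist d (fst D (\<pi> i)) (snd D i)"
  shows "LSL_cost n d D \<pi> < LSL_cost n d D p"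
proof -
  have less: "vdist d (fst D (\<pi> i)) (snd D i) < vdist d (fst D j) (snd D i)"
    if "i < n" "j < n" "j \<noteq> \<pi> i" for i j
    using near that unfolding strict_nearest_def by blast
  have "0 < vdist d (fst D (p i)) (snd D i)" if "i < n" for i
    using less[OF that, of "p i"] pos[OF that] permutes_in_image[OF p] that by fastforce
  moreover have "(\<Sum>i<n. ln ((vdist d (fst D (\<pi> i)) (snd D i))^2))
      < (\<Sum>i<n. ln ((vdist d (fst D (p i)) (snd D i))^2))"
    using less pos by (intro sum_less_of_strict_row_minima[OF p \<pi> \<open>p \<noteq> \<pi>\<close>])
      (meson ln_less_cancel_iff power_strict_mono order.strict_trans zero_less_power
        less_imp_le zero_less_numeral)
  ultimately show ?thesis
    using pos by (simp add: LSL_cost_eq_sum_ln)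
qed

lemma estimator_eq_of_strict_nearest:
  assumes p: "p permutes {..<n}" and \<pi>: "\<pi> permutes {..<n}" and \<sigma>: "\<sigma> > 0"
    and near: "strict_nearest n d D \<pi>" and pos: "\<And>i. i < n \<Longrightarrow> 0 < vdist d (fst D (\<pi> i)) (snd D i)"
    and est: "is_greedy n d D p \<or> is_LSS n d D p \<or> is_LSNS n d (\<lambda>_. \<sigma>) (\<lambda>_. \<sigma>) D p
      \<or> is_LSL n d D p"
  shows "p = \<pi>"
proof (rule ccontr)
  assume "p \<noteq> \<pi>"
  note LSS_less = LSS_cost_less_of_strict_nearest[OF p \<pi> \<open>p \<noteq> \<pi>\<close> near]
  consider "is_greedy n d D p" | "is_LSS n d D p" | "is_LSNS n d (\<lambda>_. \<sigma>) (\<lambda>_. \<sigma>) D p"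
    | "is_LSL n d D p"
    using est by blast
  then show False
  proof cases
    case 1
    then have "p = \<pi>"
      using near unfolding is_greedy_def strict_nearest_def
      by (intro greedy_eq_of_strict_row_minima[where \<delta>="\<lambda>i j. vdist d (fst D j) (snd D i)", OF p \<pi>])
        auto
    with \<open>p \<noteq> \<pi>\<close> show False ..
  next
    case 2
    then show False using LSS_less \<pi> unfolding is_LSS_def by fastforce
  next
    case 3
    then have "LSS_cost n d D p / (\<sigma>^2 + \<sigma>^2) \<le> LSS_cost n d D \<pi> / (\<sigma>^2 + \<sigma>^2)"
      using \<pi> unfolding is_LSNS_def LSNS_cost_homoscedastic by blast
    with LSS_less \<sigma> show False by (simp add: divide_le_cancel)
  next
    case 4
    then show False
      using LSL_cost_less_of_strict_nearest[OF p \<pi> \<open>p \<noteq> \<pi>\<close> near pos] \<pi>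
      unfolding is_LSL_def by fastforce
  qed
qed

section \<open>The separation threshold\<close>

lemma error_event_subset_bad_events:
  assumes \<sigma>: "\<sigma> > 0" and \<pi>: "\<pi> permutes {..<n}"
    and est: "\<And>D. D \<in> space (data_space n d) \<Longrightarrow> is_greedy n d D (est D) \<or> is_LSS n d D (est D)
      \<or> is_LSNS n d (\<lambda>_. \<sigma>) (\<lambda>_. \<sigma>) D (est D) \<or> is_LSL n d D (est D)"
  shows "{\<omega>\<in>space (noise n d). est (obs n d \<theta> (\<lambda>_. \<sigma>) \<pi> \<omega>) \<noteq> \<pi>}
    \<subseteq> (\<Union>(i,j)\<in>{..<n}\<times>{..<n}. bad_event n d \<theta> \<sigma> \<pi> i j)"
proof (rule subsetI, rule ccontr)
  fix \<omega>
  assume \<omega>: "\<omega> \<in> {\<omega>\<in>space (noise n d). est (obs n d \<theta> (\<lambda>_. \<sigma>) \<pi> \<omega>) \<noteq> \<pi>}"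
    and "\<omega> \<notin> (\<Union>(i,j)\<in>{..<n}\<times>{..<n}. bad_event n d \<theta> \<sigma> \<pi> i j)"
  then have good: "\<omega> \<notin> bad_event n d \<theta> \<sigma> \<pi> i j" if "i < n" "j < n" for i j
    using that by blast
  define D where "D = obs n d \<theta> (\<lambda>_. \<sigma>) \<pi> \<omega>"
  have \<pi>_in: "i < n \<Longrightarrow> \<pi> i < n" for i using permutes_in_image[OF \<pi>] by simp
  have "est D = \<pi>"
  proof (rule estimator_eq_of_strict_nearest[OF _ \<pi> \<sigma>])
    show "est D permutes {..<n}" and disj: "is_greedy n d D (est D) \<or> is_LSS n d D (est D)
        \<or> is_LSNS n d (\<lambda>_. \<sigma>) (\<lambda>_. \<sigma>) D (est D) \<or> is_LSL n d D (est D)"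
      using est[OF obs_in_data_space[of n d \<theta> _ \<pi> \<omega>]]
      unfolding D_def is_greedy_def is_LSS_def is_LSNS_def is_LSL_def by blast+
    show "strict_nearest n d D \<pi>"
      unfolding strict_nearest_def
    proof (intro allI impI)
      fix i j assume ij: "i < n" "j < n" "j \<noteq> \<pi> i"
      then show "vdist d (fst D (\<pi> i)) (snd D i) < vdist d (fst D j) (snd D i)"
        using good[OF ij(1,2)] \<omega> unfolding D_def bad_event_def
        by (simp add: vdist_obs \<pi>_in)
    qed
  next
    fix i assume i: "i < n"
    then show "0 < vdist d (fst D (\<pi> i)) (snd D i)"
      using good[OF i \<pi>_in[OF i]] \<omega> unfolding D_def bad_event_def
      by (simp add: vdist_obs \<pi>_in)
  qed
  with \<omega> show False unfolding D_def by simp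
qed

lemma err_prob_le_of_rel_sep:
  assumes n: "2 \<le> n" and d: "1 \<le> d" and \<sigma>: "\<sigma> > 0" and \<alpha>: "0 < \<alpha>" "\<alpha> < 1"
    and \<pi>: "\<pi> permutes {..<n}"
    and est: "\<And>D. D \<in> space (data_space n d) \<Longrightarrow> is_greedy n d D (est D) \<or> is_LSS n d D (est D)
      \<or> is_LSNS n d (\<lambda>_. \<sigma>) (\<lambda>_. \<sigma>) D (est D) \<or> is_LSL n d D (est D)"
    and B: "0 \<le> B" "32 * ln (real n ^ 2 / \<alpha>) \<le> B^2" "256 * real d * ln (real n ^ 2 / \<alpha>) \<le> B^4"
    and sep: "B < rel_sep n d \<theta> (\<lambda>_. \<sigma>)"
  shows "err_prob n d est \<theta> (\<lambda>_. \<sigma>) \<pi> \<le> \<alpha>"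
proof -
  let ?bad = "\<lambda>(i,j). bad_event n d \<theta> \<sigma> \<pi> i j"
  have "4 \<le> real n ^ 2"
    using power_mono[of 2 "real n" 2] n by simp
  then have q: "1 < real n ^ 2 / \<alpha>" using \<alpha> by (simp add: field_simps)
  have sets: "?bad ` ({..<n}\<times>{..<n}) \<subseteq> sets (noise n d)"
    using permutes_in_image[OF \<pi>] by (auto intro!: sets_bad_event)
  have "emeasure (noise n d) {\<omega>\<in>space (noise n d). est (obs n d \<theta> (\<lambda>_. \<sigma>) \<pi> \<omega>) \<noteq> \<pi>}
      \<le> emeasure (noise n d) (\<Union>(?bad ` ({..<n}\<times>{..<n})))"
    using error_event_subset_bad_events[OF \<sigma> \<pi> est] sets
    by (intro emeasure_mono sets.finite_UN) auto
  also have "\<dots> \<le> (\<Sum>ij\<in>{..<n}\<times>{..<n}. emeasure (noise n d) (?bad ij))"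
    using sets by (intro emeasure_subadditive_finite) auto
  also have "\<dots> \<le> (\<Sum>ij\<in>{..<n}\<times>{..<n}. ennreal (1 / (real n ^ 2 / \<alpha>)))"
    using emeasure_bad_event_le[OF n d \<sigma> \<pi> _ _ q B sep] by (intro sum_mono) auto
  also have "\<dots> = ennreal (\<Sum>ij\<in>{..<n}\<times>{..<n}. 1 / (real n ^ 2 / \<alpha>))"
    using \<alpha> by (intro sum_ennreal) simp
  also have "(\<Sum>ij\<in>{..<n}\<times>{..<n}. 1 / (real n ^ 2 / \<alpha>)) = \<alpha>"
    using n \<alpha> by (simp add: card_cartesian_product power2_eq_square)
  finally show ?thesis
    unfolding err_prob_def measure_def using \<alpha> by (simp add: enn2real_leI)
qed

lemma power4_powr_quarter:
  fixes x :: real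
  assumes "0 \<le> x"
  shows "(x powr (1/4)) ^ 4 = x"
proof (cases "x = 0")
  case False
  then have "(x powr (1/4)) ^ 4 = x powr (real 4 * (1/4))" by (rule powr_power)
  then show ?thesis using assms by simp
qed simp

lemma chernoff_threshold_bounds:
  fixes d L L1 L2 :: real
  defines "B \<equiv> 4 * max (sqrt (2 * L1)) ((d * L2) powr (1/4))"
  assumes "1 \<le> d" "0 < L" "L \<le> L1" "L \<le> L2"
  shows "0 < B" "32 * L \<le> B^2" "256 * d * L \<le> B^4"
proof -
  have sqrt_le: "4 * sqrt (2 * L1) \<le> B" and powr_le: "4 * (d * L2) powr (1/4) \<le> B"
    unfolding B_def by simp_all
  have nonneg: "0 \<le> L1" "0 \<le> d * L2" using assms by simp_all
  have "0 < 4 * sqrt (2 * L1)" using assms by simp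
  with sqrt_le show "0 < B" by linarith
  have "32 * L \<le> (4 * sqrt (2 * L1))^2"
    using assms nonneg by (simp add: power_mult_distrib)
  also have "\<dots> \<le> B^2"
    using sqrt_le nonneg by (intro power_mono) simp_all
  finally show "32 * L \<le> B^2" .
  have "256 * d * L \<le> (4 * (d * L2) powr (1/4))^4"
    using assms by (simp add: power_mult_distrib power4_powr_quarter mult_left_mono)
  also have "\<dots> \<le> B^4"
    using powr_le by (intro power_mono) simp_all
  finally show "256 * d * L \<le> B^4" .
qed

theorem theorem1:
  fixes n d :: nat and \<sigma> \<alpha> :: real and est :: "data \<Rightarrow> nat \<Rightarrow> nat"
  assumes "n \<ge> 2" and "d \<ge> 1" and "\<sigma> > 0" and "0 < \<alpha>" and "\<alpha> < 1"
    and est_meas: "est \<in> measurable (data_space n d) (count_space UNIV)"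
    and est_def: "(\<forall>D \<in> space (data_space n d). is_greedy n d D (est D))
              \<or> (\<forall>D \<in> space (data_space n d). is_LSS n d D (est D))
              \<or> (\<forall>D \<in> space (data_space n d). is_LSNS n d (\<lambda>_. \<sigma>) (\<lambda>_. \<sigma>) D (est D))
              \<or> (\<forall>D \<in> space (data_space n d). is_LSL n d D (est D))"
  shows "perc_sep n d (\<lambda>_. \<sigma>) \<alpha> est \<le>
    ereal (4 * max (sqrt (2 * ln (8 * real n ^ 2 / \<alpha>)))
                   ((real d * ln (4 * real n ^ 2 / \<alpha>)) powr (1/4)))"
  (is "_ \<le> ereal ?B")
proof -
  let ?L = "ln (real n ^ 2 / \<alpha>)"
  have "4 \<le> real n ^ 2"
    using power_mono[of 2 "real n" 2] assms(1) by simp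
  then have "0 < real n ^ 2 / \<alpha>" "1 < real n ^ 2 / \<alpha>"
    using assms(1,4,5) by (simp_all add: field_simps)
  then have "0 < ?L" "?L \<le> ln (8 * real n ^ 2 / \<alpha>)" "?L \<le> ln (4 * real n ^ 2 / \<alpha>)"
    by (simp_all add: divide_right_mono)
  then have B: "0 < ?B" "32 * ?L \<le> ?B^2" "256 * real d * ?L \<le> ?B^4"
    using chernoff_threshold_bounds[of "real d" ?L] assms(2) by simp_all
  have "\<pi> permutes {..<n} \<Longrightarrow> ?B < rel_sep n d \<theta> (\<lambda>_. \<sigma>) \<Longrightarrow> err_prob n d est \<theta> (\<lambda>_. \<sigma>) \<pi> \<le> \<alpha>"
    for \<pi> \<theta>
    using assms(1-5) est_def B(1) by (intro err_prob_le_of_rel_sep[OF _ _ _ _ _ _ _ _ B(2,3)]) auto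
  then show ?thesis
    unfolding perc_sep_def using B(1) by (intro Inf_lower) blast
qed

end
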